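(* Let $T$ be an $\mathcal O$-operator on a Lie algebra $\mathfrak g$ with respect to a representation $(V;\rho)$, and let $T^1_t=T+t\mathfrak T_1$ and $T^2_t=T+t\mathfrak T_2$ be one-parameter infinitesimal deformations of $T$. If $T^1_t$ and $T^2_t$ are equivalent, then $\mathfrak T_1$ and $\mathfrak T_2$ lie in the same cohomology class of $\mathcal H^1(V,\mathfrak g)$.
   Context: An $\mathcal O$-operator: linear $T:V\to\mathfrak g$ with $[Tu,Tv]=T(\rho(Tu)(v)-\rho(Tv)(u))$. A one-parameter infinitesimal deformation of $T$ is $T+t\mathfrak T$ with $\mathfrak T:V\to\mathfrak g$ linear such that $T+t\mathfrak T$ is an $\mathcal O$-operator for all scalars $t$ (then $\mathfrak T$ is a $1$-cocycle below). A homomorphism from an $\mathcal O$-operator $T'$ to $T$ is a pair of a Lie algebra homomorphism $\phi_{\mathfrak g}:\mathfrak g\to\mathfrak g$ and a linear $\phi_V:V\to V$ with $T\circ\phi_V=\phi_{\mathfrak g}\circ T'$ and $\phi_V\rho(x)(u)=\rho(\phi_{\mathfrak g}(x))(\phi_V(u))$. The deformations $T^1_t,T^2_t$ are equivalent if there is $x\in\mathfrak g$ such that $(\mathrm{Id}_{\mathfrak g}+t\,\mathrm{ad}_x,\mathrm{Id}_V+t\rho(x))$ is a homomorphism from $T^2_t$ to $T^1_t$. Cohomology: $[u,v]_T=\rho(Tu)(v)-\rho(Tv)(u)$ is a Lie bracket on $V$, $\bar\rho(u)(x)=[Tu,x]+T\rho(x)(u)$ is a representation of $(V,[\cdot,\cdot]_T)$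 on $\mathfrak g$, and $\mathcal H^k(V,\mathfrak g)$ is the Chevalley–Eilenberg cohomology of $(V,[\cdot,\cdot]_T)$ with coefficients in $(\mathfrak g,\bar\rho)$, with coboundary $d_{\bar\rho}f(u_1,\dots,u_{k+1})=\sum_{i}(-1)^{i+1}[Tu_i,f(\dots,\hat u_i,\dots)]+\sum_i(-1)^{i+1}T\rho(f(\dots,\hat u_i,\dots))(u_i)+\sum_{i<j}(-1)^{i+j}f([u_i,u_j]_T,u_1,\dots,\hat u_i,\dots,\hat u_j,\dots,u_{k+1})$ on $\mathrm{Hom}(\wedge^kV,\mathfrak g)$. *)

theory Defs
  imports Complex_Main
begin

text \<open>Vector spaces over a field 'k are given by a scalar multiplication on an
  abelian group type; linear maps are Vector_Spaces.linear.\<close>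

definition lie_algebra :: "('k::field \<Rightarrow> 'g::ab_group_add \<Rightarrow> 'g) \<Rightarrow> ('g \<Rightarrow> 'g \<Rightarrow> 'g) \<Rightarrow> bool" where
  "lie_algebra sg br \<longleftrightarrow>
     vector_space sg \<and>
     (\<forall>x. Vector_Spaces.linear sg sg (br x)) \<and> (\<forall>y. Vector_Spaces.linear sg sg (\<lambda>x. br x y)) \<and>
     (\<forall>x. br x x = 0) \<and>
     (\<forall>x y z. br x (br y z) + br y (br z x) + br z (br x y) = 0)"

definition lie_rep ::
  "('k::field \<Rightarrow> 'g::ab_group_add \<Rightarrow> 'g) \<Rightarrow> ('g \<Rightarrow> 'g \<Rightarrow> 'g) \<Rightarrow>
   ('k \<Rightarrow> 'v::ab_group_add \<Rightarrow> 'v) \<Rightarrow> ('g \<Rightarrow> 'v \<Rightarrow> 'v) \<Rightarrow> bool" where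
  "lie_rep sg br sv rho \<longleftrightarrow>
     lie_algebra sg br \<and> vector_space sv \<and>
     (\<forall>x. Vector_Spaces.linear sv sv (rho x)) \<and> (\<forall>u. Vector_Spaces.linear sg sv (\<lambda>x. rho x u)) \<and>
     (\<forall>x y u. rho (br x y) u = rho x (rho y u) - rho y (rho x u))"

definition O_operator ::
  "('k::field \<Rightarrow> 'g::ab_group_add \<Rightarrow> 'g) \<Rightarrow> ('g \<Rightarrow> 'g \<Rightarrow> 'g) \<Rightarrow>
   ('k \<Rightarrow> 'v::ab_group_add \<Rightarrow> 'v) \<Rightarrow> ('g \<Rightarrow> 'v \<Rightarrow> 'v) \<Rightarrow> ('v \<Rightarrow> 'g) \<Rightarrow> bool" where
  "O_operator sg br sv rho T \<longleftrightarrow>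
     Vector_Spaces.linear sv sg T \<and>
     (\<forall>u v. br (T u) (T v) = T (rho (T u) v - rho (T v) u))"

definition deform :: "('k \<Rightarrow> 'g \<Rightarrow> 'g) \<Rightarrow> ('v \<Rightarrow> 'g::ab_group_add) \<Rightarrow> ('v \<Rightarrow> 'g) \<Rightarrow> 'k \<Rightarrow> 'v \<Rightarrow> 'g" where
  "deform sg T TT t = (\<lambda>u. T u + sg t (TT u))"

definition inf_deformation ::
  "('k::field \<Rightarrow> 'g::ab_group_add \<Rightarrow> 'g) \<Rightarrow> ('g \<Rightarrow> 'g \<Rightarrow> 'g) \<Rightarrow>
   ('k \<Rightarrow> 'v::ab_group_add \<Rightarrow> 'v) \<Rightarrow> ('g \<Rightarrow> 'v \<Rightarrow> 'v) \<Rightarrow> ('v \<Rightarrow> 'g) \<Rightarrow> ('v \<Rightarrow> 'g) \<Rightarrow> bool" where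
  "inf_deformation sg br sv rho T TT \<longleftrightarrow>
     Vector_Spaces.linear sv sg TT \<and> (\<forall>t. O_operator sg br sv rho (deform sg T TT t))"

definition lie_hom ::
  "('k::field \<Rightarrow> 'g::ab_group_add \<Rightarrow> 'g) \<Rightarrow> ('g \<Rightarrow> 'g \<Rightarrow> 'g) \<Rightarrow> ('g \<Rightarrow> 'g) \<Rightarrow> bool" where
  "lie_hom sg br phi \<longleftrightarrow> Vector_Spaces.linear sg sg phi \<and> (\<forall>x y. phi (br x y) = br (phi x) (phi y))"

definition O_hom ::
  "('k::field \<Rightarrow> 'g::ab_group_add \<Rightarrow> 'g) \<Rightarrow> ('g \<Rightarrow> 'g \<Rightarrow> 'g) \<Rightarrow>
   ('k \<Rightarrow> 'v::ab_group_add \<Rightarrow> 'v) \<Rightarrow> ('g \<Rightarrow> 'v \<Rightarrow> 'v) \<Rightarrow>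
   ('v \<Rightarrow> 'g) \<Rightarrow> ('v \<Rightarrow> 'g) \<Rightarrow> ('g \<Rightarrow> 'g) \<Rightarrow> ('v \<Rightarrow> 'v) \<Rightarrow> bool" where
  "O_hom sg br sv rho T' T phig phiV \<longleftrightarrow>
     lie_hom sg br phig \<and> Vector_Spaces.linear sv sv phiV \<and>
     (\<forall>u. T (phiV u) = phig (T' u)) \<and>
     (\<forall>x u. phiV (rho x u) = rho (phig x) (phiV u))"

definition equiv_deformations ::
  "('k::field \<Rightarrow> 'g::ab_group_add \<Rightarrow> 'g) \<Rightarrow> ('g \<Rightarrow> 'g \<Rightarrow> 'g) \<Rightarrow>
   ('k \<Rightarrow> 'v::ab_group_add \<Rightarrow> 'v) \<Rightarrow> ('g \<Rightarrow> 'v \<Rightarrow> 'v) \<Rightarrow>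
   ('k \<Rightarrow> 'v \<Rightarrow> 'g) \<Rightarrow> ('k \<Rightarrow> 'v \<Rightarrow> 'g) \<Rightarrow> bool" where
  "equiv_deformations sg br sv rho T1t T2t \<longleftrightarrow>
     (\<exists>x. \<forall>t. O_hom sg br sv rho (T2t t) (T1t t)
                 (\<lambda>y. y + sg t (br x y)) (\<lambda>u. u + sv t (rho x u)))"

text \<open>Cohomology of (V,[.,.]_T) with coefficients in (g, bar rho), low degrees.\<close>
definition bracketT :: "('g \<Rightarrow> 'v \<Rightarrow> 'v::ab_group_add) \<Rightarrow> ('v \<Rightarrow> 'g) \<Rightarrow> 'v \<Rightarrow> 'v \<Rightarrow> 'v" where
  "bracketT rho T u v = rho (T u) v - rho (T v) u"

definition d0 :: "('g \<Rightarrow> 'g \<Rightarrow> 'g) \<Rightarrow> ('g \<Rightarrow> 'v \<Rightarrow> 'v) \<Rightarrow> ('v \<Rightarrow> 'g) \<Rightarrow> 'g \<Rightarrow> 'v \<Rightarrow> 'g::ab_group_add" where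
  "d0 br rho T x = (\<lambda>u. br (T u) x + T (rho x u))"

definition d1 :: "('g \<Rightarrow> 'g \<Rightarrow> 'g) \<Rightarrow> ('g \<Rightarrow> 'v \<Rightarrow> 'v::ab_group_add) \<Rightarrow> ('v \<Rightarrow> 'g) \<Rightarrow> ('v \<Rightarrow> 'g) \<Rightarrow> 'v \<Rightarrow> 'v \<Rightarrow> 'g::ab_group_add" where
  "d1 br rho T f = (\<lambda>u1 u2.
      br (T u1) (f u2) - br (T u2) (f u1)
      + T (rho (f u2) u1) - T (rho (f u1) u2)
      - f (bracketT rho T u1 u2))"

definition cocycle1 ::
  "('k::field \<Rightarrow> 'g::ab_group_add \<Rightarrow> 'g) \<Rightarrow> ('g \<Rightarrow> 'g \<Rightarrow> 'g) \<Rightarrow>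
   ('k \<Rightarrow> 'v::ab_group_add \<Rightarrow> 'v) \<Rightarrow> ('g \<Rightarrow> 'v \<Rightarrow> 'v) \<Rightarrow> ('v \<Rightarrow> 'g) \<Rightarrow> ('v \<Rightarrow> 'g) \<Rightarrow> bool" where
  "cocycle1 sg br sv rho T f \<longleftrightarrow> Vector_Spaces.linear sv sg f \<and> (\<forall>u1 u2. d1 br rho T f u1 u2 = 0)"

definition same_class_H1 ::
  "('k::field \<Rightarrow> 'g::ab_group_add \<Rightarrow> 'g) \<Rightarrow> ('g \<Rightarrow> 'g \<Rightarrow> 'g) \<Rightarrow>
   ('k \<Rightarrow> 'v::ab_group_add \<Rightarrow> 'v) \<Rightarrow> ('g \<Rightarrow> 'v \<Rightarrow> 'v) \<Rightarrow> ('v \<Rightarrow> 'g) \<Rightarrow> ('v \<Rightarrow> 'g) \<Rightarrow> ('v \<Rightarrow> 'g) \<Rightarrow> bool" where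
  "same_class_H1 sg br sv rho T f1 f2 \<longleftrightarrow>
     cocycle1 sg br sv rho T f1 \<and> cocycle1 sg br sv rho T f2 \<and>
     (\<exists>x. \<forall>u. f1 u - f2 u = d0 br rho T x u)"

end

theory Submission
  imports Defs
begin

text \<open>An equivalence between \<open>T + t TT\<^sub>1\<close> and \<open>T + t TT\<^sub>2\<close> given by \<open>x\<close> is an
  identity between polynomials of degree two in \<open>t\<close>. Its linear coefficient reads
  \<open>TT\<^sub>1 u - TT\<^sub>2 u = [x, Tu] - T(\<rho>(x) u)\<close>, i.e. \<open>TT\<^sub>1 - TT\<^sub>2 = d(-x)\<close>. Likewise the linear
  coefficient of the O-operator identity for \<open>T + t TT\<close> is the cocycle condition \<open>d TT = 0\<close>.
  Over a field of characteristic zero such coefficients can be read off, since a quadratic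
  \<open>a + t b + t\<^sup>2 c\<close> vanishing for all \<open>t\<close> has \<open>b = 0\<close>.\<close>

lemma linear_apply_simps:
  assumes "Vector_Spaces.linear s1 s2 f"
  shows "f (a + b) = f a + f b" "f (s1 r a) = s2 r (f a)" "f (a - b) = f a - f b" "f (- a) = - f a"
  using assms linear_iff_module_hom module_hom.add module_hom.scale module_hom.diff module_hom.neg
  by metis+

lemma linear_coeff_eq_0_if_quadratic_vanishes:
  fixes s :: "'k::field_char_0 \<Rightarrow> 'a::ab_group_add \<Rightarrow> 'a"
  assumes "vector_space s" and vanish: "\<And>t. a + s t b + s (t * t) c = 0"
  shows "b = 0"
proof -
  interpret vector_space s by fact
  have "a = 0" using vanish[of 0] by simp
  then have "b + c = 0" and "- b + c = 0" using vanish[of 1] vanish[of "-1"] by simp_all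
  then have "b + b = 0" by (metis add_diff_cancel_right' diff_minus_eq_add diff_self)
  then have "s 2 b = 0" using scale_left_distrib[of 1 1 b] by simp
  then show "b = 0" by simp
qed

locale O_operator_setting =
  fixes sg :: "'k::field_char_0 \<Rightarrow> 'g::ab_group_add \<Rightarrow> 'g"
    and br :: "'g \<Rightarrow> 'g \<Rightarrow> 'g"
    and sv :: "'k \<Rightarrow> 'v::ab_group_add \<Rightarrow> 'v"
    and rho :: "'g \<Rightarrow> 'v \<Rightarrow> 'v"
    and T :: "'v \<Rightarrow> 'g"
  assumes lie_rep: "lie_rep sg br sv rho"
    and O_operator: "O_operator sg br sv rho T"
begin

sublocale g: vector_space sg
  using lie_rep unfolding lie_rep_def lie_algebra_def by blast

sublocale V: vector_space sv
  using lie_rep unfolding lie_rep_def by blast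

lemma bracket_linear: "Vector_Spaces.linear sg sg (br x)" "Vector_Spaces.linear sg sg (\<lambda>x. br x y)"
  using lie_rep unfolding lie_rep_def lie_algebra_def by blast+

lemma rho_linear: "Vector_Spaces.linear sv sv (rho x)" "Vector_Spaces.linear sg sv (\<lambda>x. rho x u)"
  using lie_rep unfolding lie_rep_def by blast+

lemma T_linear: "Vector_Spaces.linear sv sg T"
  using O_operator unfolding O_operator_def by blast

lemmas bracket_simps = linear_apply_simps[OF bracket_linear(1)] linear_apply_simps[OF bracket_linear(2)]
lemmas rho_simps = linear_apply_simps[OF rho_linear(1)] linear_apply_simps[OF rho_linear(2)]
lemmas T_simps = linear_apply_simps[OF T_linear]

lemma bracket_anticomm: "br a b = - br b a"
proof -
  have alt: "br x x = 0" for x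
    using lie_rep unfolding lie_rep_def lie_algebra_def by blast
  have "br (a + b) (a + b) = br a a + br b a + (br a b + br b b)"
    by (simp only: bracket_simps)
  then have "br a b + br b a = 0" by (simp add: alt add.commute)
  then show ?thesis by (simp add: eq_neg_iff_add_eq_0)
qed

lemma inf_deformation_linear_term:
  assumes "inf_deformation sg br sv rho T TT"
  shows "br (T u) (TT v) + br (TT u) (T v)
    = T (rho (TT u) v - rho (TT v) u) + TT (rho (T u) v - rho (T v) u)"
proof -
  have TT_simps: "TT (a + b) = TT a + TT b" "TT (sv r a) = sg r (TT a)" for a b r
    using assms linear_apply_simps unfolding inf_deformation_def by metis+
  define w0 w1 where "w0 = rho (T u) v - rho (T v) u" and "w1 = rho (TT u) v - rho (TT v) u"
  have "br (T u) (TT v) + br (TT u) (T v) - T w1 - TT w0 = 0"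
  proof (rule linear_coeff_eq_0_if_quadratic_vanishes[OF g.vector_space_axioms])
    fix t
    have "br (deform sg T TT t u) (deform sg T TT t v)
        = deform sg T TT t (rho (deform sg T TT t u) v - rho (deform sg T TT t v) u)"
      using assms unfolding inf_deformation_def O_operator_def by blast
    moreover have "rho (deform sg T TT t u) v - rho (deform sg T TT t v) u = w0 + sv t w1"
      unfolding deform_def w0_def w1_def by (simp add: rho_simps V.scale_right_diff_distrib algebra_simps)
    ultimately have "br (T u) (T v) + sg t (br (T u) (TT v) + br (TT u) (T v)) + sg (t * t) (br (TT u) (TT v))
        = T w0 + sg t (T w1 + TT w0) + sg (t * t) (TT w1)"
      unfolding deform_def
      by (simp add: bracket_simps T_simps TT_simps g.scale_right_distrib algebra_simps)
    then show "(br (T u) (T v) - T w0) + sg t (br (T u) (TT v) + br (TT u) (T v) - T w1 - TT w0)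
        + sg (t * t) (br (TT u) (TT v) - TT w1) = 0"
      by (simp add: g.scale_right_diff_distrib algebra_simps)
  qed
  then show ?thesis unfolding w0_def w1_def by (simp add: algebra_simps)
qed

lemma inf_deformation_cocycle1:
  assumes "inf_deformation sg br sv rho T TT"
  shows "cocycle1 sg br sv rho T TT"
  using assms inf_deformation_linear_term[OF assms]
  unfolding cocycle1_def inf_deformation_def d1_def bracketT_def
  by (simp add: T_simps bracket_anticomm[of "T v" "TT u" for u v] algebra_simps)

lemma equiv_deformations_diff_coboundary:
  assumes "inf_deformation sg br sv rho T TT1"
    and "equiv_deformations sg br sv rho (deform sg T TT1) (deform sg T TT2)"
  shows "\<exists>x. \<forall>u. TT1 u - TT2 u = d0 br rho T x u"
proof -
  have TT1_simps: "TT1 (a + b) = TT1 a + TT1 b" "TT1 (sv r a) = sg r (TT1 a)" for a b r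
    using assms(1) linear_apply_simps unfolding inf_deformation_def by metis+
  obtain x where hom: "\<And>t. O_hom sg br sv rho (deform sg T TT2 t) (deform sg T TT1 t)
      (\<lambda>y. y + sg t (br x y)) (\<lambda>u. u + sv t (rho x u))"
    using assms(2) unfolding equiv_deformations_def by blast
  have "T (rho x u) + TT1 u - TT2 u - br x (T u) = 0" for u
  proof (rule linear_coeff_eq_0_if_quadratic_vanishes[OF g.vector_space_axioms])
    fix t
    have "deform sg T TT1 t (u + sv t (rho x u))
        = deform sg T TT2 t u + sg t (br x (deform sg T TT2 t u))"
      using hom[of t] unfolding O_hom_def by blast
    then have "T u + sg t (T (rho x u) + TT1 u) + sg (t * t) (TT1 (rho x u))
        = T u + sg t (TT2 u + br x (T u)) + sg (t * t) (br x (TT2 u))"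
      unfolding deform_def
      by (simp add: T_simps TT1_simps bracket_simps g.scale_right_distrib algebra_simps)
    then show "0 + sg t (T (rho x u) + TT1 u - TT2 u - br x (T u))
        + sg (t * t) (TT1 (rho x u) - br x (TT2 u)) = 0"
      by (simp add: g.scale_right_diff_distrib g.scale_right_distrib algebra_simps)
  qed
  then have "TT1 u - TT2 u = d0 br rho T (- x) u" for u
    unfolding d0_def by (simp add: bracket_simps rho_simps T_simps bracket_anticomm[of "T u" x] algebra_simps)
  then show ?thesis by blast
qed

end

theorem theorem4p7:
  fixes sg :: "'k::field_char_0 \<Rightarrow> 'g::ab_group_add \<Rightarrow> 'g"
    and sv :: "'k \<Rightarrow> 'v::ab_group_add \<Rightarrow> 'v"
    and br :: "'g \<Rightarrow> 'g \<Rightarrow> 'g"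
    and rho :: "'g \<Rightarrow> 'v \<Rightarrow> 'v"
    and T TT1 TT2 :: "'v \<Rightarrow> 'g"
  assumes "lie_rep sg br sv rho"
    and "O_operator sg br sv rho T"
    and "inf_deformation sg br sv rho T TT1"
    and "inf_deformation sg br sv rho T TT2"
    and "equiv_deformations sg br sv rho (deform sg T TT1) (deform sg T TT2)"
  shows "same_class_H1 sg br sv rho T TT1 TT2"
proof -
  interpret O_operator_setting sg br sv rho T
    using assms(1,2) by unfold_locales
  show ?thesis
    unfolding same_class_H1_def
    using inf_deformation_cocycle1[OF assms(3)] inf_deformation_cocycle1[OF assms(4)]
      equiv_deformations_diff_coboundary[OF assms(3,5)]
    by blast
qed

end
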